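(* Let $P_S,H_{SR},H_{SD},H_{RD},\sigma_R^2,\sigma_D^2>0$ and $\eta\in(0,1]$. Set $C_{SR}=\log(1+P_SH_{SR}/\sigma_R^2)$, $m=P_SH_{SD}/\sigma_D^2$, $C_{SD}=b=\log(1+m)$, $a=C_{SR}-C_{SD}$, $c=\eta H_{SR}H_{RD}P_S/\sigma_D^2$, and assume $a>0$. Let $$f_2(\lambda)=\lambda b+(1-\lambda)\log\Big(1+m+\frac{c\lambda}{1-\lambda}\Big),\quad\lambda\in(0,1),$$ and consider $\max_{\lambda\in(0,1)}\min\{\lambda C_{SR},f_2(\lambda)\}$. Then: (i) the equation $\lambda C_{SR}=f_2(\lambda)$ has exactly one solution $\lambda_1\in(0,1)$, namely $$\lambda_1=\frac{-\frac1a\mathcal W_{-1}\!\big(-\frac{a}{c}e^{-\frac{a(1+m)}{c}}\big)-\frac{1+m}{c}}{1-\frac1a\mathcal W_{-1}\!\big(-\frac{a}{c}e^{-\frac{a(1+m)}{c}}\big)-\frac{1+m}{c}};$$ (ii) $f_2$ has exactly one stationary point $\lambda_2\in(0,1)$, namely $$\lambda_2=\frac{e^{\mathcal W_0\left(\frac{c-(1+m)}{e^{1+b}}\right)+b+1}-(1+m)}{e^{\mathcal W_0\left(\frac{c-(1+m)}{e^{1+b}}\right)+b+1}+c-(1+m)};$$ (iii) $\lambda^*=\max\{\lambda_1,\lambda_2\}$ attains the maximum of $\min\{\lambda C_{SR},f_2(\lambda)\}$ over $\lambda\in(0,1)$.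
   Context: $\log$ is the natural logarithm. $\mathcal W_0$ and $\mathcal W_{-1}$ denote the principal and the lower real branches of the Lambert W function (real solutions $w$ of $we^w=x$ with $w\ge-1$, resp. $w\le-1$). This is the optimal time-fraction problem for the "ideal" energy-harvesting relay protocol with energy accumulation (maximal ratio combining) at the destination, where the relay forwarding power is $\eta H_{SR}P_S\lambda/(1-\lambda)$. *)

theory Defs
  imports "HOL-Analysis.Analysis"
begin

definition LambertW0 :: "real \<Rightarrow> real" where
  "LambertW0 x = (THE w. w \<ge> -1 \<and> w * exp w = x)"

definition LambertWm1 :: "real \<Rightarrow> real" where
  "LambertWm1 x = (THE w. w \<le> -1 \<and> w * exp w = x)"

end

theory Submission
  imports Defs "HOL-Real_Asymp.Real_Asymp"
begin

text \<open>
  Write \<open>K = 1 + m\<close>, so that \<open>b = ln K\<close> and \<open>C_SR = a + b\<close>. Substituting \<open>x = \<lambda> / (1 - \<lambda>)\<close>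
  turns \<open>\<lambda> C_SR = f2 \<lambda>\<close> into \<open>ln (K + c x) = a x\<close>. For a root \<open>x \<ge> 0\<close> the number
  \<open>w = - a (K + c x) / c\<close> satisfies \<open>w \<le> -1\<close> and \<open>w exp w = - (a / c) exp (- a K / c)\<close>; since
  \<open>w exp w\<close> is injective on \<open>w \<le> -1\<close>, the root is unique and given by \<open>LambertWm1\<close>, which yields
  \<open>\<lambda>\<^sub>1\<close>. The root exists by the intermediate value theorem, and beyond it \<open>\<lambda> C_SR > f2 \<lambda>\<close>.

  In terms of \<open>y = K + c \<lambda> / (1 - \<lambda>)\<close> the derivative of \<open>f2\<close> is \<open>1 + b - ln y + (c - K) / y\<close>,
  strictly decreasing in \<open>y \<ge> K\<close> and hence in \<open>\<lambda>\<close>. At its zero, \<open>v = ln y - b - 1 \<ge> -1\<close> satisfies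
  \<open>v exp v = (c - K) / exp (1 + b)\<close>, so \<open>v\<close> is given by \<open>LambertW0\<close>, which yields \<open>\<lambda>\<^sub>2\<close>. Thus \<open>f2\<close>
  increases up to \<open>\<lambda>\<^sub>2\<close> and decreases afterwards, and \<open>min (\<lambda> C_SR) (f2 \<lambda>)\<close> is maximal at \<open>\<lambda>\<^sub>1\<close>
  if \<open>\<lambda>\<^sub>2 \<le> \<lambda>\<^sub>1\<close> and at \<open>\<lambda>\<^sub>2\<close> otherwise.
\<close>

lemma has_real_derivative_xexp:
  "((\<lambda>w. w * exp w) has_real_derivative (1 + x) * exp x) (at x)"
  by (auto intro!: derivative_eq_intros simp: algebra_simps)

lemma inj_on_xexp_atLeast: "inj_on (\<lambda>w::real. w * exp w) {-1..}"
proof (rule linorder_inj_onI')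
  fix u v :: real assume "u \<in> {-1..}" "v \<in> {-1..}" "u < v"
  then have "u * exp u < v * exp v"
    by (intro DERIV_pos_imp_increasing_open[OF \<open>u < v\<close>] continuous_intros)
       (auto intro!: exI has_real_derivative_xexp)
  then show "u * exp u \<noteq> v * exp v" by simp
qed

lemma inj_on_xexp_atMost: "inj_on (\<lambda>w::real. w * exp w) {..-1}"
proof (rule linorder_inj_onI')
  fix u v :: real assume "u \<in> {..-1}" "v \<in> {..-1}" "u < v"
  then have "u * exp u > v * exp v"
    by (intro DERIV_neg_imp_decreasing_open[OF \<open>u < v\<close>] continuous_intros)
       (auto intro!: exI has_real_derivative_xexp simp: mult_neg_pos)
  then show "u * exp u \<noteq> v * exp v" by simp
qed

lemma LambertW0_eqI:
  assumes "-1 \<le> w" "w * exp w = x"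
  shows "LambertW0 x = w"
  unfolding LambertW0_def
  using assms inj_on_xexp_atLeast by (intro the_equality) (auto dest: inj_onD)

lemma LambertWm1_eqI:
  assumes "w \<le> -1" "w * exp w = x"
  shows "LambertWm1 x = w"
  unfolding LambertWm1_def
  using assms inj_on_xexp_atMost by (intro the_equality) (auto dest: inj_onD)

definition mrc_rate :: "real \<Rightarrow> real \<Rightarrow> real \<Rightarrow> real" where
  "mrc_rate K c l = l * ln K + (1 - l) * ln (K + c * l / (1 - l))"

lemma mrc_rate_gap:
  assumes "l < 1"
  shows "l * (a + ln K) - mrc_rate K c l = (1 - l) * (a * (l / (1 - l)) - ln (K + c * (l / (1 - l))))"
  using assms by (simp add: mrc_rate_def field_simps)

context
  fixes K a c :: real
  assumes K: "1 < K" and a: "0 < a" and c: "0 < c"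
begin

lemma eventually_ln_affine_less_linear: "eventually (\<lambda>x. ln (K + c * x) < a * x) at_top"
  using a c by real_asymp

lemma ln_linear_root_LambertWm1:
  assumes x: "0 \<le> x" and root: "ln (K + c * x) = a * x"
  shows "LambertWm1 (- (a / c) * exp (- (a * K / c))) = - a * (K + c * x) / c"
proof -
  define y where "y = K + c * x"
  have y: "K \<le> y" "0 < y"
    using x K c by (auto simp: y_def add_pos_nonneg)
  have "c \<le> a * y" \<comment> \<open>the root lies on the lower branch\<close>
  proof (rule ccontr)
    assume "\<not> c \<le> a * y"
    have "ln y = a * (y - K) / c"
      using root c by (simp add: y_def)
    also have "\<dots> \<le> (c / y) * (y - K) / c"
      using \<open>\<not> c \<le> a * y\<close> y c
      by (intro divide_right_mono mult_right_mono) (auto simp: field_simps)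
    also have "\<dots> = 1 - K / y"
      using y c by (simp add: field_simps)
    also have "\<dots> \<le> ln y - ln K"
      using ln_le_minus_one[of "K / y"] K y by (simp add: ln_div)
    also have "\<dots> < ln y"
      using K by simp
    finally show False by simp
  qed
  then have "- a * y / c \<le> -1"
    using c by (simp add: field_simps)
  moreover have "exp (- a * y / c) = exp (- (a * K / c)) / y"
  proof -
    have "- a * y / c = - (a * K / c) - a * x"
      using c by (simp add: y_def field_simps)
    moreover have "exp (a * x) = y"
      using y(2) by (simp add: y_def flip: root)
    ultimately show ?thesis
      by (simp add: exp_diff)
  qed
  then have "(- a * y / c) * exp (- a * y / c) = - (a / c) * exp (- (a * K / c))"
    using y by simp
  ultimately show ?thesis
    unfolding y_def by (rule LambertWm1_eqI)
qed

lemma ln_linear_root_unique: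
  assumes "0 \<le> x" "ln (K + c * x) = a * x" "0 \<le> x'" "ln (K + c * x') = a * x'"
  shows "x = x'"
proof -
  have "- a * (K + c * x) / c = - a * (K + c * x') / c"
    using ln_linear_root_LambertWm1[OF assms(1,2)] ln_linear_root_LambertWm1[OF assms(3,4)] by simp
  then show ?thesis
    using a c by simp
qed

lemma ln_linear_root_atLeast:
  assumes "0 \<le> u" "a * u \<le> ln (K + c * u)"
  shows "\<exists>x \<ge> u. ln (K + c * x) = a * x"
proof -
  obtain X where X: "u \<le> X" "ln (K + c * X) < a * X"
    using eventually_conj[OF eventually_ge_at_top[of u] eventually_ln_affine_less_linear]
    by (auto simp: eventually_at_top_linorder)
  have "0 < K + c * x" if "u \<le> x" for x
    using that assms K c by (intro add_pos_nonneg mult_nonneg_nonneg) auto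
  then have "continuous_on {u..X} (\<lambda>x. a * x - ln (K + c * x))"
    by (intro continuous_intros) force+
  then obtain x where "u \<le> x" "a * x - ln (K + c * x) = 0"
    using IVT'[of "\<lambda>x. a * x - ln (K + c * x)" u 0 X] assms X by auto
  then show ?thesis by auto
qed

lemma ln_linear_root_exists: "\<exists>x > 0. ln (K + c * x) = a * x"
proof -
  obtain x where "0 \<le> x" "ln (K + c * x) = a * x"
    using ln_linear_root_atLeast[of 0] K by auto
  moreover have "x \<noteq> 0"
    using calculation K by auto
  ultimately show ?thesis
    by (intro exI[of _ x]) auto
qed

lemma ln_less_linear_beyond_root:
  assumes "0 \<le> x1" "ln (K + c * x1) = a * x1" "x1 < x"
  shows "ln (K + c * x) < a * x"
proof (rule ccontr)
  assume "\<not> ln (K + c * x) < a * x"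
  then obtain x' where "x \<le> x'" "ln (K + c * x') = a * x'"
    using ln_linear_root_atLeast[of x] assms by auto
  then show False
    using ln_linear_root_unique[of x1 x'] assms by auto
qed

lemma mrc_rate_crossing_LambertWm1:
  "{l \<in> {0<..<1}. l * (a + ln K) = mrc_rate K c l}
     = {(- (1 / a) * LambertWm1 (- (a / c) * exp (- (a * K / c))) - K / c)
        / (1 - (1 / a) * LambertWm1 (- (a / c) * exp (- (a * K / c))) - K / c)}"
proof -
  obtain x1 where x1: "0 < x1" "ln (K + c * x1) = a * x1"
    using ln_linear_root_exists by blast
  have "(- (1 / a) * LambertWm1 (- (a / c) * exp (- (a * K / c))) - K / c)
        / (1 - (1 / a) * LambertWm1 (- (a / c) * exp (- (a * K / c))) - K / c) = x1 / (1 + x1)"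
  proof -
    have "- (1 / a) * (- a * (K + c * x1) / c) - K / c = x1"
         "1 - (1 / a) * (- a * (K + c * x1) / c) - K / c = 1 + x1"
      using a c by (simp_all add: field_simps)
    then show ?thesis
      unfolding ln_linear_root_LambertWm1[OF less_imp_le[OF x1(1)] x1(2)] by (simp only:)
  qed
  moreover have "l * (a + ln K) = mrc_rate K c l \<longleftrightarrow> l = x1 / (1 + x1)"
    if "0 < l" "l < 1" for l
  proof -
    have "l * (a + ln K) = mrc_rate K c l \<longleftrightarrow> ln (K + c * (l / (1 - l))) = a * (l / (1 - l))"
      using mrc_rate_gap[of l a K c] that by auto
    also have "\<dots> \<longleftrightarrow> l / (1 - l) = x1"
      using ln_linear_root_unique[of "l / (1 - l)" x1] x1 that by auto
    also have "\<dots> \<longleftrightarrow> l = x1 / (1 + x1)"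
      using that x1 by (auto simp: field_simps)
    finally show ?thesis .
  qed
  moreover have "x1 / (1 + x1) \<in> {0<..<1}"
    using x1 by simp
  ultimately show ?thesis
    by auto
qed

lemma mrc_rate_less_after_crossing:
  assumes "0 < l1" "l1 * (a + ln K) = mrc_rate K c l1" "l1 < l" "l < 1"
  shows "mrc_rate K c l < l * (a + ln K)"
proof -
  have "0 \<le> l1 / (1 - l1)"
    using assms by simp
  moreover have "ln (K + c * (l1 / (1 - l1))) = a * (l1 / (1 - l1))"
    using mrc_rate_gap[of l1 a K c] assms by simp
  moreover have "l1 / (1 - l1) < l / (1 - l)"
    using assms by (simp add: field_simps)
  ultimately have "ln (K + c * (l / (1 - l))) < a * (l / (1 - l))"
    by (rule ln_less_linear_beyond_root)
  then have "0 < (1 - l) * (a * (l / (1 - l)) - ln (K + c * (l / (1 - l))))"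
    using assms by simp
  then show ?thesis
    using mrc_rate_gap[of l a K c] assms by linarith
qed

end

definition mrc_slope :: "real \<Rightarrow> real \<Rightarrow> real \<Rightarrow> real" where
  "mrc_slope K c y = 1 + ln K - ln y + (c - K) / y"

lemma mrc_rate_has_derivative:
  assumes "0 < K" "0 \<le> c" "0 < l" "l < 1"
  shows "(mrc_rate K c has_real_derivative mrc_slope K c (K + c * l / (1 - l))) (at l)"
proof -
  define Y where "Y = K + c * l / (1 - l)"
  have Y: "0 < Y"
    using assms by (auto simp: Y_def intro: add_pos_nonneg)
  have "Y * (1 - l) = K * (1 - l) + c * l"
    using assms by (simp add: Y_def field_simps)
  then have "(c * (1 - l) + c * l) / (Y * (1 - l)) = (Y * (1 - l) + (c - K) * (1 - l)) / (Y * (1 - l))"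
    by (simp add: algebra_simps)
  also have "\<dots> = 1 + (c - K) / Y"
    using Y assms by (simp add: add_divide_distrib)
  finally show ?thesis
    unfolding mrc_rate_def[abs_def] mrc_slope_def Y_def[symmetric] using assms Y
    by (auto intro!: derivative_eq_intros simp: Y_def)
qed

context
  fixes K c :: real
  assumes K: "0 < K" and c: "0 < c"
begin

lemma eventually_mrc_slope_neg: "eventually (\<lambda>y. mrc_slope K c y < 0) at_top"
  unfolding mrc_slope_def using K by real_asymp

lemma mrc_slope_strict_antimono:
  assumes "K \<le> y1" "y1 < y2"
  shows "mrc_slope K c y2 < mrc_slope K c y1"
proof (rule DERIV_neg_imp_decreasing[OF \<open>y1 < y2\<close>])
  fix y assume "y1 \<le> y" "y \<le> y2"
  then have "0 < y" "0 < y + c - K"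
    using assms K c by auto
  then have "(mrc_slope K c has_real_derivative - ((y + c - K) / y\<^sup>2)) (at y)"
    unfolding mrc_slope_def[abs_def]
    by (auto intro!: derivative_eq_intros simp: field_simps power2_eq_square)
  moreover have "0 < (y + c - K) / y\<^sup>2"
    using \<open>0 < y\<close> \<open>0 < y + c - K\<close> by simp
  ultimately show "\<exists>d. (mrc_slope K c has_real_derivative d) (at y) \<and> d < 0"
    using neg_less_0_iff_less by blast
qed

lemma mrc_slope_zero_LambertW0:
  assumes "K \<le> y" "mrc_slope K c y = 0"
  shows "exp (LambertW0 ((c - K) / exp (1 + ln K)) + ln K + 1) = y"
proof -
  define v where "v = ln y - ln K - 1"
  have y: "0 < y"
    using assms K by simp
  have "v = (c - K) / y"
    using assms(2) by (simp add: mrc_slope_def v_def)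
  moreover have "exp v = y / exp (1 + ln K)"
    using y K by (simp add: v_def exp_diff exp_add)
  ultimately have "v * exp v = (c - K) / exp (1 + ln K)"
    using y by simp
  moreover have "-1 \<le> v"
    using assms K by (simp add: v_def)
  ultimately have "LambertW0 ((c - K) / exp (1 + ln K)) = v"
    by (intro LambertW0_eqI)
  then show ?thesis
    using y K by (simp add: v_def)
qed

lemma mrc_slope_zero_exists: "\<exists>y > K. mrc_slope K c y = 0"
proof -
  obtain Y where Y: "K \<le> Y" "mrc_slope K c Y < 0"
    using eventually_conj[OF eventually_ge_at_top[of K] eventually_mrc_slope_neg]
    by (auto simp: eventually_at_top_linorder)
  have "continuous_on {K..Y} (mrc_slope K c)"
    unfolding mrc_slope_def[abs_def] using K by (intro continuous_intros) auto
  moreover have "mrc_slope K c K = c / K"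
    using K by (simp add: mrc_slope_def field_simps)
  ultimately obtain y where "K \<le> y" "mrc_slope K c y = 0"
    using IVT2'[of "mrc_slope K c" Y 0 K] Y K c by auto
  moreover have "y \<noteq> K"
    using calculation \<open>mrc_slope K c K = c / K\<close> K c by auto
  ultimately show ?thesis
    by (intro exI[of _ y]) auto
qed

lemma mrc_rate_stationary_LambertW0:
  "{l \<in> {0<..<1}. (mrc_rate K c has_real_derivative 0) (at l)}
     = {(exp (LambertW0 ((c - K) / exp (1 + ln K)) + ln K + 1) - K)
        / (exp (LambertW0 ((c - K) / exp (1 + ln K)) + ln K + 1) + c - K)}"
proof -
  obtain y0 where y0: "K < y0" "mrc_slope K c y0 = 0"
    using mrc_slope_zero_exists by blast
  have W: "exp (LambertW0 ((c - K) / exp (1 + ln K)) + ln K + 1) = y0"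
    using mrc_slope_zero_LambertW0 y0 by simp
  have "(mrc_rate K c has_real_derivative 0) (at l) \<longleftrightarrow> l = (y0 - K) / (y0 + c - K)"
    if l: "0 < l" "l < 1" for l
  proof -
    have "K \<le> K + c * l / (1 - l)"
      using l c by simp
    have "(mrc_rate K c has_real_derivative 0) (at l) \<longleftrightarrow> mrc_slope K c (K + c * l / (1 - l)) = 0"
      using mrc_rate_has_derivative[of K c l] K c l by (metis DERIV_unique less_imp_le)
    also have "\<dots> \<longleftrightarrow> K + c * l / (1 - l) = y0"
      using mrc_slope_zero_LambertW0[OF \<open>K \<le> K + c * l / (1 - l)\<close>] W y0 by auto
    also have "\<dots> \<longleftrightarrow> l = (y0 - K) / (y0 + c - K)"
      using l c y0 by (auto simp: field_simps)
    finally show ?thesis .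
  qed
  moreover have "(y0 - K) / (y0 + c - K) \<in> {0<..<1}"
    using y0 c by simp
  ultimately show ?thesis
    unfolding W by auto
qed

lemma mrc_rate_unimodal:
  assumes l2: "0 < l2" "l2 < 1" "(mrc_rate K c has_real_derivative 0) (at l2)"
  shows mrc_rate_mono_upto_stationary:
      "\<lbrakk>0 < x; x \<le> y; y \<le> l2\<rbrakk> \<Longrightarrow> mrc_rate K c x \<le> mrc_rate K c y"
    and mrc_rate_antimono_from_stationary:
      "\<lbrakk>l2 \<le> x; x \<le> y; y < 1\<rbrakk> \<Longrightarrow> mrc_rate K c y \<le> mrc_rate K c x"
proof -
  define Y where "Y l = K + c * l / (1 - l)" for l
  have deriv: "(mrc_rate K c has_real_derivative mrc_slope K c (Y l)) (at l)" if "0 < l" "l < 1" for l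
    unfolding Y_def using mrc_rate_has_derivative K c that by simp
  have slope_l2: "mrc_slope K c (Y l2) = 0"
    using DERIV_unique deriv l2 by blast
  have Y_ge: "K \<le> Y l" if "0 < l" "l < 1" for l
    using that c by (simp add: Y_def)
  have Y_less: "Y l < Y l'" if "0 < l" "l < l'" "l' < 1" for l l'
    using that c by (simp add: Y_def field_simps)
  have cont: "continuous_on {x..y} (mrc_rate K c)" if "0 < x" "y < 1" for x y
    using that by (intro continuous_at_imp_continuous_on ballI DERIV_isCont[OF deriv]) auto
  show "mrc_rate K c x \<le> mrc_rate K c y" if "0 < x" "x \<le> y" "y \<le> l2"
  proof (rule DERIV_nonneg_imp_increasing_open[OF \<open>x \<le> y\<close> _ cont])
    fix z assume "x < z" "z < y"
    then have "mrc_slope K c (Y l2) < mrc_slope K c (Y z)"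
      using that l2 by (intro mrc_slope_strict_antimono Y_ge Y_less) auto
    then have "0 < mrc_slope K c (Y z)"
      using slope_l2 by simp
    then show "\<exists>d. (mrc_rate K c has_real_derivative d) (at z) \<and> 0 \<le> d"
      using deriv \<open>x < z\<close> \<open>z < y\<close> that l2 by (intro exI[of _ "mrc_slope K c (Y z)"]) auto
  qed (use that l2 in auto)
  show "mrc_rate K c y \<le> mrc_rate K c x" if "l2 \<le> x" "x \<le> y" "y < 1"
  proof (rule DERIV_nonpos_imp_decreasing_open[OF \<open>x \<le> y\<close> _ cont])
    fix z assume "x < z" "z < y"
    then have "mrc_slope K c (Y z) < mrc_slope K c (Y l2)"
      using that l2 by (intro mrc_slope_strict_antimono Y_ge Y_less) auto
    then have "mrc_slope K c (Y z) < 0"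
      using slope_l2 by simp
    then show "\<exists>d. (mrc_rate K c has_real_derivative d) (at z) \<and> d \<le> 0"
      using deriv \<open>x < z\<close> \<open>z < y\<close> that l2 by (intro exI[of _ "mrc_slope K c (Y z)"]) auto
  qed (use that l2 in auto)
qed

end

lemma max_min_at_crossing_or_peak:
  fixes f :: "real \<Rightarrow> real"
  assumes "0 \<le> C" "l2 < 1" "0 < l" "l < 1"
    and cross: "l1 * C = f l1"
    and below: "\<And>x. l1 < x \<Longrightarrow> x < 1 \<Longrightarrow> f x < x * C"
    and up: "\<And>x y. 0 < x \<Longrightarrow> x \<le> y \<Longrightarrow> y \<le> l2 \<Longrightarrow> f x \<le> f y"
    and down: "\<And>x y. l2 \<le> x \<Longrightarrow> x \<le> y \<Longrightarrow> y < 1 \<Longrightarrow> f y \<le> f x"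
  shows "min (l * C) (f l) \<le> min (max l1 l2 * C) (f (max l1 l2))"
proof (cases "l2 \<le> l1")
  case True
  have "min (l * C) (f l) \<le> l1 * C"
  proof (cases "l \<le> l1")
    case True
    then show ?thesis
      using \<open>0 \<le> C\<close> by (simp add: min.coboundedI1 mult_right_mono)
  next
    case False
    then show ?thesis
      using down[of l1 l] cross \<open>l2 \<le> l1\<close> \<open>l < 1\<close> by (simp add: min.coboundedI2)
  qed
  then show ?thesis
    using True cross by simp
next
  case False
  have "f l \<le> f l2"
    using up[of l l2] down[of l2 l] \<open>0 < l\<close> \<open>l < 1\<close> by (cases "l \<le> l2") auto
  moreover have "f l2 < l2 * C"
    using below False \<open>l2 < 1\<close> by simp
  ultimately show ?thesis
    using False by (simp add: min.coboundedI2)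
qed

theorem theorem2:
  fixes P_S H_SR H_SD H_RD \<sigma>R2 \<sigma>D2 \<eta> :: real
  assumes pos: "P_S > 0" "H_SR > 0" "H_SD > 0" "H_RD > 0" "\<sigma>R2 > 0" "\<sigma>D2 > 0"
      and eta: "0 < \<eta>" "\<eta> \<le> 1"
  defines "C_SR \<equiv> ln (1 + P_S * H_SR / \<sigma>R2)"
      and "m \<equiv> P_S * H_SD / \<sigma>D2"
      and "b \<equiv> ln (1 + P_S * H_SD / \<sigma>D2)"
      and "a \<equiv> ln (1 + P_S * H_SR / \<sigma>R2) - ln (1 + P_S * H_SD / \<sigma>D2)"
      and "c \<equiv> \<eta> * H_SR * H_RD * P_S / \<sigma>D2"
  assumes apos: "a > 0"
  defines "f2 \<equiv> (\<lambda>l::real. l * b + (1 - l) * ln (1 + m + c * l / (1 - l)))"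
      and "lam1 \<equiv> (- (1 / a) * LambertWm1 (- (a / c) * exp (- (a * (1 + m) / c))) - (1 + m) / c)
                / (1 - (1 / a) * LambertWm1 (- (a / c) * exp (- (a * (1 + m) / c))) - (1 + m) / c)"
      and "lam2 \<equiv> (exp (LambertW0 ((c - (1 + m)) / exp (1 + b)) + b + 1) - (1 + m))
                / (exp (LambertW0 ((c - (1 + m)) / exp (1 + b)) + b + 1) + c - (1 + m))"
  shows "{l \<in> {0<..<1}. l * C_SR = f2 l} = {lam1}
         \<and> {l \<in> {0<..<1}. (f2 has_real_derivative 0) (at l)} = {lam2}
         \<and> max lam1 lam2 \<in> {0<..<1} \<and>
         (\<forall>l \<in> {0<..<1}. min (l * C_SR) (f2 l)
              \<le> min (max lam1 lam2 * C_SR) (f2 (max lam1 lam2)))"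
proof -
  have K: "1 < 1 + m" and c: "0 < c"
    using pos eta by (simp_all add: m_def c_def)
  have b: "b = ln (1 + m)" and C: "C_SR = a + ln (1 + m)"
    by (simp_all add: b_def m_def C_SR_def a_def)
  have f2: "f2 = mrc_rate (1 + m) c"
    by (simp add: f2_def b mrc_rate_def fun_eq_iff)
  have crossing: "{l \<in> {0<..<1}. l * C_SR = f2 l} = {lam1}"
    unfolding C f2 lam1_def by (rule mrc_rate_crossing_LambertWm1[OF K apos c])
  have stationary: "{l \<in> {0<..<1}. (f2 has_real_derivative 0) (at l)} = {lam2}"
    unfolding f2 lam2_def b using mrc_rate_stationary_LambertW0[of "1 + m" c] K c by simp
  have lam1: "0 < lam1" "lam1 < 1" "lam1 * C_SR = f2 lam1"
    using crossing by auto
  have lam2: "0 < lam2" "lam2 < 1" "(f2 has_real_derivative 0) (at lam2)"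
    using stationary by auto
  have "min (l * C_SR) (f2 l) \<le> min (max lam1 lam2 * C_SR) (f2 (max lam1 lam2))"
    if "0 < l" "l < 1" for l
  proof (rule max_min_at_crossing_or_peak[where f = f2, OF _ lam2(2) that lam1(3)])
    show "0 \<le> C_SR"
      using K apos by (simp add: C)
    show "f2 x < x * C_SR" if "lam1 < x" "x < 1" for x
      using mrc_rate_less_after_crossing[OF K apos c] lam1 that unfolding C f2 by simp
    show "f2 x \<le> f2 y" if "0 < x" "x \<le> y" "y \<le> lam2" for x y
      using mrc_rate_mono_upto_stationary[of "1 + m" c lam2] K c lam2 that unfolding f2 by simp
    show "f2 y \<le> f2 x" if "lam2 \<le> x" "x \<le> y" "y < 1" for x y
      using mrc_rate_antimono_from_stationary[of "1 + m" c lam2] K c lam2 that unfolding f2 by simp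
  qed
  then show ?thesis
    using crossing stationary lam1 lam2 by (simp add: max_def)
qed

end
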